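(* Let $G=(V,E,H)$ be a HEDG such that every strongly connected component $S$ of $G$ lies completely in one district of the induced sub-HEDG $\mathrm{Anc}^G(S)$. Then every pseudo-topological order for $G$ is a perfect elimination order for $G$ (and thus a quasi-topological order).
   Context: HEDG $G=(V,E,H)$: $V$ finite, $E\subseteq V\times V$ (self-loops allowed), $H$ a simplicial complex on $V$ (contains singletons, closed under subsets); $v\leftrightarrow w$ for distinct $v,w$ with $\{v,w\}\in H$. $\mathrm{Pa}^G$, $\mathrm{Anc}^G$, $\mathrm{Desc}^G$ (including the node); $\mathrm{Sc}^G(v)=\mathrm{Anc}^G(v)\cap\mathrm{Desc}^G(v)$ is the strongly connected component of $v$. Induced sub-HEDG on $A$: $(A,E\cap A^2,\{F\in H:F\subseteq A\})$; $A$ ancestral if $\mathrm{Anc}(A)=A$. District of $v$ in a HEDG: $v$ together with all nodes connected to $v$ by a bidirected path $v\leftrightarrow\cdots\leftrightarrow w$. Marginalization $G^{\mathrm{marg}\setminus U}=(V\setminus U,E',H')$: $v_1\to v_2\in E'$ iff a directed path $v_1\to u_1\to\cdots\to u_r\to v_2$ ($r\ge0$, $u_i\in U$) exists; $F'\in H'$ iff there is $F\in H$, $F\subseteq F'\cup U$, with each $v\in F'$ in $F\setminus U$ or reached by a directed path $u_1\to\cdots\to u_r\to v$ ($r\ge1$, $u_i\in U$, $u_1\in F$). Moralization: $v-w$ ($v\ne w$) iff there are $v_1,\dots,v_n$ with $v\in\{v_1\}\cup\mathrm{Pa}(v_1)$, $w\in\{v_n\}\cup\mathrm{Pa}(v_n)$,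 $v_1\leftrightarrow\cdots\leftrightarrow v_n$. $\partial_U(v)$: neighbours in undirected graph $U$. For a total order $<$ on $V$: $\mathrm{Pred}^G_\le(v)=G^{\mathrm{marg}\setminus\{w:w>v\}}$. $<$ is pseudo-topological if $w<v$ for all $v$ and all $w\in\mathrm{Anc}^G(v)\setminus\mathrm{Sc}^G(v)$; a perfect elimination order if for all $v$ and every ancestral sub-HEDG $A$ of $\mathrm{Pred}^G_\le(v)$ with $v\in A$, $\partial_{A^{\mathrm{moral}}}(v)\cup\{v\}$ is complete in $A^{\mathrm{moral}}$; quasi-topological if both. *)

theory Defs
  imports Main
begin

text \<open>A HEDG (V,E,H). An edge (v,w) in E means v \<rightarrow> w.\<close>
record 'a hedg =
  verts :: "'a set"
  edges :: "('a \<times> 'a) set"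
  hyper :: "'a set set"

definition is_hedg :: "'a hedg \<Rightarrow> bool" where
  "is_hedg G \<longleftrightarrow> finite (verts G) \<and> edges G \<subseteq> verts G \<times> verts G
     \<and> (\<forall>F\<in>hyper G. F \<subseteq> verts G)
     \<and> (\<forall>v\<in>verts G. {v} \<in> hyper G)
     \<and> (\<forall>F\<in>hyper G. \<forall>F'. F' \<subseteq> F \<longrightarrow> F' \<in> hyper G)"

definition pa :: "'a hedg \<Rightarrow> 'a \<Rightarrow> 'a set" where
  "pa G v = {w. (w, v) \<in> edges G}"

definition anc :: "'a hedg \<Rightarrow> 'a \<Rightarrow> 'a set" where
  "anc G v = {w \<in> verts G. (w, v) \<in> (edges G)\<^sup>*}"

definition desc :: "'a hedg \<Rightarrow> 'a \<Rightarrow> 'a set" where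
  "desc G v = {w \<in> verts G. (v, w) \<in> (edges G)\<^sup>*}"

definition anc_set :: "'a hedg \<Rightarrow> 'a set \<Rightarrow> 'a set" where
  "anc_set G A = (\<Union>v\<in>A. anc G v)"

definition sc :: "'a hedg \<Rightarrow> 'a \<Rightarrow> 'a set" where
  "sc G v = anc G v \<inter> desc G v"

definition induced :: "'a hedg \<Rightarrow> 'a set \<Rightarrow> 'a hedg" where
  "induced G A = \<lparr>verts = A, edges = edges G \<inter> (A \<times> A), hyper = {F \<in> hyper G. F \<subseteq> A}\<rparr>"

definition ancestral :: "'a hedg \<Rightarrow> 'a set \<Rightarrow> bool" where
  "ancestral G A \<longleftrightarrow> A \<subseteq> verts G \<and> anc_set G A = A"

definition bidir :: "'a hedg \<Rightarrow> ('a \<times> 'a) set" where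
  "bidir G = {(v, w). v \<noteq> w \<and> {v, w} \<in> hyper G}"

definition district :: "'a hedg \<Rightarrow> 'a \<Rightarrow> 'a set" where
  "district G v = {w \<in> verts G. (v, w) \<in> (bidir G)\<^sup>*}"

text \<open>Marginalization of U. Edges ending in U (used for directed paths through U).\<close>
definition edges_into :: "'a hedg \<Rightarrow> 'a set \<Rightarrow> ('a \<times> 'a) set" where
  "edges_into G U = {(a, b) \<in> edges G. b \<in> U}"

definition marg :: "'a hedg \<Rightarrow> 'a set \<Rightarrow> 'a hedg" where
  "marg G U = \<lparr>verts = verts G - U,
     edges = {(v1, v2). v1 \<in> verts G - U \<and> v2 \<in> verts G - U \<and>
                (v1, v2) \<in> (edges_into G U)\<^sup>* O edges G},
     hyper = {F'. F' \<subseteq> verts G - U \<and>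
                (\<exists>F\<in>hyper G. F \<subseteq> F' \<union> U \<and>
                   (\<forall>v\<in>F'. v \<in> F - U \<or>
                      (\<exists>u\<in>F \<inter> U. (u, v) \<in> (edges_into G U)\<^sup>* O edges G)))}\<rparr>"

definition moral_adj :: "'a hedg \<Rightarrow> 'a \<Rightarrow> 'a \<Rightarrow> bool" where
  "moral_adj G v w \<longleftrightarrow> v \<noteq> w \<and>
     (\<exists>v1 vn. v1 \<in> verts G \<and> v \<in> insert v1 (pa G v1) \<and> w \<in> insert vn (pa G vn)
        \<and> (v1, vn) \<in> (bidir G)\<^sup>*)"

definition moral_nbrs :: "'a hedg \<Rightarrow> 'a \<Rightarrow> 'a set" where
  "moral_nbrs G v = {w. moral_adj G v w}"

definition moral_complete :: "'a hedg \<Rightarrow> 'a set \<Rightarrow> bool" where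
  "moral_complete G S \<longleftrightarrow> (\<forall>x\<in>S. \<forall>y\<in>S. x \<noteq> y \<longrightarrow> moral_adj G x y)"

text \<open>Orders: a strict total order R on V, (w,v) \<in> R meaning w < v.\<close>
definition pred_hedg :: "'a hedg \<Rightarrow> ('a \<times> 'a) set \<Rightarrow> 'a \<Rightarrow> 'a hedg" where
  "pred_hedg G R v = marg G {w \<in> verts G. (v, w) \<in> R}"

definition pseudo_topological :: "'a hedg \<Rightarrow> ('a \<times> 'a) set \<Rightarrow> bool" where
  "pseudo_topological G R \<longleftrightarrow>
     (\<forall>v\<in>verts G. \<forall>w\<in>anc G v - sc G v. (w, v) \<in> R)"

definition perfect_elimination :: "'a hedg \<Rightarrow> ('a \<times> 'a) set \<Rightarrow> bool" where
  "perfect_elimination G R \<longleftrightarrow>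
     (\<forall>v\<in>verts G. \<forall>A. ancestral (pred_hedg G R v) A \<and> v \<in> A \<longrightarrow>
        (let M = induced (pred_hedg G R v) A in
           moral_complete M (insert v (moral_nbrs M v))))"

definition quasi_topological :: "'a hedg \<Rightarrow> ('a \<times> 'a) set \<Rightarrow> bool" where
  "quasi_topological G R \<longleftrightarrow> pseudo_topological G R \<and> perfect_elimination G R"

end

theory Submission
  imports Defs
begin

text \<open>
  Fix v, let P be the marginalization of all successors of v, A an ancestral set of P
  containing v, and M the sub-HEDG of P induced on A. Every child c of v in M is reached
  from v by a directed path in G and precedes v; by pseudo-topologicality it lies in the
  strongly connected component of v. The hypothesis puts v and c into one district of
  the ancestors of that component, and a bidirected path there projects to M: each
  vertex that was marginalized out is replaced by a vertex of A it reaches through the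
  marginalized vertices. Hence all children of v lie in its district in M, and then
  every two members of v's moral neighbourhood are moral neighbours via that district.
\<close>

lemma sym_bidir: "sym (bidir X)"
  unfolding bidir_def sym_def by (auto simp: insert_commute)

lemma rtrancl_bidir_sym: "(a, b) \<in> (bidir X)\<^sup>* \<Longrightarrow> (b, a) \<in> (bidir X)\<^sup>*"
  using sym_rtrancl[OF sym_bidir] by (meson symD)

lemma rtrancl_bidir_closed:
  assumes "(a, b) \<in> (bidir X)\<^sup>*" "a \<in> S" "\<forall>F\<in>hyper X. F \<subseteq> S"
  shows "b \<in> S"
  using assms(1)
proof (induction rule: rtrancl_induct)
  case base
  then show ?case using assms(2) by simp
next
  case (step y z)
  then show ?case using assms(3) by (auto simp: bidir_def)
qed

lemma moral_complete_moral_nbrs: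
  assumes hyper: "\<forall>F\<in>hyper X. F \<subseteq> verts X" and v: "v \<in> verts X"
    and children: "\<And>c. (v, c) \<in> edges X \<Longrightarrow> c \<in> district X v"
  shows "moral_complete X (insert v (moral_nbrs X v))"
proof -
  have blanket: "\<exists>u\<in>verts X. z \<in> insert u (pa X u) \<and> (v, u) \<in> (bidir X)\<^sup>*"
    if z: "z \<in> insert v (moral_nbrs X v)" for z
  proof (cases "z = v")
    case True
    then show ?thesis using v by blast
  next
    case False
    then obtain v1 vn where v1: "v1 \<in> verts X" "v \<in> insert v1 (pa X v1)"
      and vn: "z \<in> insert vn (pa X vn)" "(v1, vn) \<in> (bidir X)\<^sup>*"
      using z by (auto simp: moral_nbrs_def moral_adj_def)
    have "(v, v1) \<in> (bidir X)\<^sup>*"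
      using v1(2) children by (auto simp: pa_def district_def)
    moreover have "vn \<in> verts X"
      using rtrancl_bidir_closed[OF vn(2) v1(1) hyper] .
    ultimately show ?thesis using vn by (meson rtrancl_trans)
  qed
  show ?thesis
    unfolding moral_complete_def
  proof (intro ballI impI)
    fix x y
    assume "x \<in> insert v (moral_nbrs X v)" "y \<in> insert v (moral_nbrs X v)" "x \<noteq> y"
    moreover obtain ux uy where "ux \<in> verts X" "x \<in> insert ux (pa X ux)" "(v, ux) \<in> (bidir X)\<^sup>*"
      "y \<in> insert uy (pa X uy)" "(v, uy) \<in> (bidir X)\<^sup>*"
      using blanket calculation(1,2) by meson
    moreover have "(ux, uy) \<in> (bidir X)\<^sup>*"
      using calculation by (meson rtrancl_bidir_sym rtrancl_trans)
    ultimately show "moral_adj X x y" by (auto simp: moral_adj_def)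
  qed
qed

text \<open>The vertices that may stand in for y in the hyperedges of the marginalization of U.\<close>
definition marg_proxy :: "'a hedg \<Rightarrow> 'a set \<Rightarrow> 'a \<Rightarrow> 'a \<Rightarrow> bool" where
  "marg_proxy G U y z \<longleftrightarrow> z \<in> verts G - U \<and>
     (if y \<in> U then (y, z) \<in> (edges_into G U)\<^sup>* O edges G else z = y)"

lemma marg_edge_rtrancl:
  assumes "(a, b) \<in> edges (marg G U)"
  shows "(a, b) \<in> (edges G)\<^sup>*"
proof -
  have "(edges_into G U)\<^sup>* \<subseteq> (edges G)\<^sup>*"
    unfolding edges_into_def by (rule rtrancl_mono) blast
  then show ?thesis using assms by (auto simp: marg_def intro: rtrancl_into_rtrancl)
qed

lemma rtrancl_edges_marg_proxy:
  assumes EV: "edges G \<subseteq> verts G \<times> verts G"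
    and "(y, b) \<in> (edges G)\<^sup>*" "y \<in> verts G" "b \<notin> U"
  shows "\<exists>z. marg_proxy G U y z \<and> (z, b) \<in> (edges (marg G U))\<^sup>*"
  using assms(2-3)
proof (induction rule: converse_rtrancl_induct)
  case base
  then show ?case using \<open>b \<notin> U\<close> by (auto simp: marg_proxy_def)
next
  case (step y y')
  have "y' \<in> verts G" using step.hyps(1) EV by auto
  then obtain z' where z': "marg_proxy G U y' z'" "(z', b) \<in> (edges (marg G U))\<^sup>*"
    using step.IH by blast
  have "(y, z') \<in> (edges_into G U)\<^sup>* O edges G"
  proof (cases "y' \<in> U")
    case True
    then have "(y, y') \<in> edges_into G U" using step.hyps(1) by (simp add: edges_into_def)
    then show ?thesis using z'(1) True
      by (auto simp: marg_proxy_def intro: converse_rtrancl_into_rtrancl)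
  next
    case False
    then show ?thesis using z'(1) step.hyps(1) by (auto simp: marg_proxy_def)
  qed
  then have "y \<notin> U \<longrightarrow> (y, z') \<in> edges (marg G U)"
    using step.prems z'(1) by (auto simp: marg_def marg_proxy_def)
  then show ?case
    using z' \<open>(y, z') \<in> _\<close> step.prems
    by (cases "y \<in> U") (auto simp: marg_proxy_def intro: converse_rtrancl_into_rtrancl)
qed

lemma marg_proxy_hyper:
  assumes "{y, y'} \<in> hyper G" "marg_proxy G U y z" "marg_proxy G U y' z'"
  shows "{z, z'} \<in> hyper (marg G U)"
proof -
  have "{y, y'} \<subseteq> {z, z'} \<union> U"
    and "\<forall>t\<in>{z, z'}. t \<in> {y, y'} - U \<or> (\<exists>u\<in>{y, y'} \<inter> U. (u, t) \<in> (edges_into G U)\<^sup>* O edges G)"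
    using assms(2,3) by (auto simp: marg_proxy_def split: if_splits)
  moreover have "{z, z'} \<subseteq> verts G - U" using assms(2,3) by (simp add: marg_proxy_def)
  ultimately show ?thesis
    using assms(1) unfolding marg_def by (simp only: hedg.select_convs mem_Collect_eq) blast
qed

lemma ancestral_rtrancl_mem:
  assumes "ancestral X A" "b \<in> A" "z \<in> verts X" "(z, b) \<in> (edges X)\<^sup>*"
  shows "z \<in> A"
proof -
  have "z \<in> anc_set X A" using assms(2-4) by (auto simp: anc_set_def anc_def)
  then show ?thesis using assms(1) by (simp add: ancestral_def)
qed

lemma rtrancl_bidir_induced_marg:
  assumes EV: "edges G \<subseteq> verts G \<times> verts G"
    and b: "b \<notin> U" "b \<in> A" and A: "ancestral (marg G U) A"
    and B: "B \<subseteq> anc G b" and x: "x \<in> A"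
    and "(x, y) \<in> (bidir (induced G B))\<^sup>*"
  shows "\<exists>z\<in>A. marg_proxy G U y z \<and> (x, z) \<in> (bidir (induced (marg G U) A))\<^sup>*"
  using assms(7)
proof (induction rule: rtrancl_induct)
  case base
  have "x \<in> verts G - U" using x A by (auto simp: ancestral_def marg_def)
  then show ?case using x by (auto simp: marg_proxy_def)
next
  case (step y y')
  obtain z where z: "z \<in> A" "marg_proxy G U y z" "(x, z) \<in> (bidir (induced (marg G U) A))\<^sup>*"
    using step.IH by blast
  have hyp: "{y, y'} \<in> hyper G" and "y' \<in> anc G b"
    using step.hyps(2) B by (auto simp: bidir_def induced_def)
  then obtain z' where z': "marg_proxy G U y' z'" "(z', b) \<in> (edges (marg G U))\<^sup>*"
    using rtrancl_edges_marg_proxy[OF EV _ _ b(1)] by (auto simp: anc_def)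
  have "z' \<in> A"
    using ancestral_rtrancl_mem[OF A b(2) _ z'(2)] z'(1) by (simp add: marg_proxy_def marg_def)
  moreover have "{z, z'} \<in> hyper (induced (marg G U) A)"
    using marg_proxy_hyper[OF hyp z(2) z'(1)] z(1) \<open>z' \<in> A\<close> by (simp add: induced_def)
  then have "(z, z') \<in> (bidir (induced (marg G U) A))\<^sup>*"
    by (cases "z = z'") (auto simp: bidir_def)
  ultimately show ?case using z'(1) z(3) by (meson rtrancl_trans)
qed

lemma pseudo_topological_pred_child_sc:
  assumes order: "strict_linear_order_on (verts G) R" and pt: "pseudo_topological G R"
    and v: "v \<in> verts G" and vc: "(v, c) \<in> edges (pred_hedg G R v)"
  shows "c \<in> sc G v"
proof -
  have c: "c \<in> verts G" "(v, c) \<notin> R"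
    using vc by (auto simp: pred_hedg_def marg_def)
  have path: "(v, c) \<in> (edges G)\<^sup>*"
    using vc marg_edge_rtrancl by (fastforce simp: pred_hedg_def)
  have "c \<in> anc G v"
  proof (cases "c = v")
    case True
    then show ?thesis using v by (simp add: anc_def)
  next
    case False
    then have "(c, v) \<in> R" using order c v by (auto simp: strict_linear_order_on_def total_on_def)
    show ?thesis
    proof (rule ccontr)
      assume "c \<notin> anc G v"
      then have "v \<in> anc G c - sc G c" using path v c by (auto simp: anc_def sc_def desc_def)
      then have "(v, c) \<in> R" using pt c by (auto simp: pseudo_topological_def)
      then show False using \<open>(c, v) \<in> R\<close> order
        by (auto simp: strict_linear_order_on_def irrefl_def dest: transD)
    qed
  qed
  then show ?thesis using path c by (simp add: sc_def desc_def)
qed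

lemma anc_set_sc_subset_anc: "anc_set G (sc G v) \<subseteq> anc G v"
  by (auto simp: anc_set_def sc_def anc_def)

lemma pred_hedg_child_in_district:
  assumes G: "is_hedg G" and order: "strict_linear_order_on (verts G) R"
    and pt: "pseudo_topological G R" and v: "v \<in> verts G"
    and sc_district: "sc G v \<subseteq> district (induced G (anc_set G (sc G v))) w"
    and A: "ancestral (pred_hedg G R v) A" "v \<in> A"
    and vc: "(v, c) \<in> edges (induced (pred_hedg G R v) A)"
  shows "c \<in> district (induced (pred_hedg G R v) A) v"
proof -
  define U where "U = {w \<in> verts G. (v, w) \<in> R}"
  have P: "pred_hedg G R v = marg G U" by (simp add: pred_hedg_def U_def)
  have "v \<notin> U" using order by (auto simp: U_def strict_linear_order_on_def irrefl_def)
  have c: "c \<in> A" "c \<notin> U" "c \<in> sc G v"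
    using vc A pseudo_topological_pred_child_sc[OF order pt v]
    by (auto simp: induced_def ancestral_def P marg_def)
  have "v \<in> sc G v" using v by (simp add: sc_def anc_def desc_def)
  then have "(w, v) \<in> (bidir (induced G (anc_set G (sc G v))))\<^sup>*"
    and "(w, c) \<in> (bidir (induced G (anc_set G (sc G v))))\<^sup>*"
    using sc_district c(3) by (auto simp: district_def)
  then have "(v, c) \<in> (bidir (induced G (anc_set G (sc G v))))\<^sup>*"
    by (meson rtrancl_bidir_sym rtrancl_trans)
  moreover have "edges G \<subseteq> verts G \<times> verts G" using G by (simp add: is_hedg_def)
  moreover have "ancestral (marg G U) A" using A(1) P by simp
  ultimately obtain z where "marg_proxy G U c z" "(v, z) \<in> (bidir (induced (marg G U) A))\<^sup>*"
    using rtrancl_bidir_induced_marg[OF _ \<open>v \<notin> U\<close> A(2) _ anc_set_sc_subset_anc A(2)] by blast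
  then show ?thesis using c by (simp add: marg_proxy_def district_def induced_def P)
qed

theorem mainTheorem11:
  fixes G :: "'a hedg" and R :: "('a \<times> 'a) set"
  assumes "is_hedg G"
    and "\<forall>v\<in>verts G. \<exists>w\<in>anc_set G (sc G v).
           sc G v \<subseteq> district (induced G (anc_set G (sc G v))) w"
    and "strict_linear_order_on (verts G) R"
    and "pseudo_topological G R"
  shows "perfect_elimination G R \<and> quasi_topological G R"
proof -
  have "perfect_elimination G R"
    unfolding perfect_elimination_def Let_def
  proof (intro ballI allI impI)
    fix v A
    assume v: "v \<in> verts G" and A: "ancestral (pred_hedg G R v) A \<and> v \<in> A"
    obtain w where "sc G v \<subseteq> district (induced G (anc_set G (sc G v))) w"
      using assms(2) v by blast
    then show "moral_complete (induced (pred_hedg G R v) A)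
        (insert v (moral_nbrs (induced (pred_hedg G R v) A) v))"
      using A pred_hedg_child_in_district[OF assms(1,3,4) v]
      by (intro moral_complete_moral_nbrs) (auto simp: induced_def)
  qed
  then show ?thesis using assms(4) by (simp add: quasi_topological_def)
qed

end
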